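(* For each fixed integer $r \geq 1$, $$AW(k;r) \leq \frac{k^{2r-1}}{(2r-1)!}\,(1+o(1)) \quad \text{as } k\to\infty .$$
   Context: A sequence of positive integers $w_1<w_2<\dots<w_n$ is an ascending wave if $w_{i+1}-w_i \geq w_i-w_{i-1}$ for $2\le i\le n-1$. For positive integers $k,r$, $AW(k;r)$ denotes the least positive integer $N$ such that every $r$-coloring of $\{1,2,\dots,N\}$ contains a $k$-term monochromatic ascending wave. *)

theory Defs
  imports Complex_Main
begin

definition ascending_wave :: "(nat \<Rightarrow> nat) \<Rightarrow> nat \<Rightarrow> bool" where
  "ascending_wave w k \<longleftrightarrow>
     (\<forall>i\<in>{1..k}. 0 < w i) \<and>
     (\<forall>i. 1 \<le> i \<and> i < k \<longrightarrow> w i < w (i+1)) \<and>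
     (\<forall>i. 2 \<le> i \<and> i \<le> k - 1 \<longrightarrow> int (w (i+1)) - int (w i) \<ge> int (w i) - int (w (i-1)))"

definition has_mono_wave :: "(nat \<Rightarrow> nat) \<Rightarrow> nat \<Rightarrow> nat \<Rightarrow> bool" where
  "has_mono_wave c N k \<longleftrightarrow>
     (\<exists>w. ascending_wave w k \<and> (\<forall>i\<in>{1..k}. w i \<in> {1..N}) \<and>
          (\<forall>i\<in>{1..k}. c (w i) = c (w 1)))"

definition AW :: "nat \<Rightarrow> nat \<Rightarrow> nat" where
  "AW k r = (LEAST N. 0 < N \<and>
      (\<forall>c :: nat \<Rightarrow> nat. (\<forall>x\<in>{1..N}. c x < r) \<longrightarrow> has_mono_wave c N k))"

end

theory Submission
  imports Defs
begin

text \<open>Induction on the number of colours: with \<open>p + 1\<close> colours, every interval of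
  \<open>wave_bound p k = (k + 2p choose 2p + 1)\<close> positive integers contains a monochromatic
  \<open>k\<close>-term ascending wave. For \<open>p + 2\<close> colours, grow a wave greedily in one colour, keeping
  its last gap at most \<open>gap_bound p m\<close> after \<open>m\<close> terms, and look at the window of length
  \<open>wave_bound p (m + 1)\<close> that starts one last gap beyond the last term. If the window
  meets the colour of the wave, the wave grows; otherwise the window uses only \<open>p + 1\<close>
  colours and, by induction, already contains a monochromatic \<open>(m + 1)\<close>-term wave, whose
  last gap is shorter than the window. Pascal's rule makes the lengths fit, and
  \<open>(n choose q) \<le> n ^ q / q!\<close> gives the asymptotics.\<close>

definition mono_wave_in :: "(nat \<Rightarrow> nat) \<Rightarrow> nat set \<Rightarrow> nat \<Rightarrow> (nat \<Rightarrow> nat) \<Rightarrow> bool" where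
  "mono_wave_in c A k w \<longleftrightarrow>
     ascending_wave w k \<and> (\<forall>i\<in>{1..k}. w i \<in> A) \<and> (\<forall>i\<in>{1..k}. c (w i) = c (w 1))"

text \<open>After a single term the next one only has to be larger, hence the value \<open>1\<close>.\<close>

definition last_gap :: "(nat \<Rightarrow> nat) \<Rightarrow> nat \<Rightarrow> nat" where
  "last_gap w m = (if m < 2 then 1 else w m - w (m - 1))"

definition wave_bound :: "nat \<Rightarrow> nat \<Rightarrow> nat" where
  "wave_bound p k = (k + 2*p) choose (2*p + 1)"

definition gap_bound :: "nat \<Rightarrow> nat \<Rightarrow> nat" where
  "gap_bound p m = (m + 2*p + 1) choose (2*p + 2)"

lemma gap_bound_Suc: "gap_bound p m + wave_bound p (Suc m) = gap_bound p (Suc m)"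
  using binomial_Suc_Suc[of "m + 2*p + 1" "2*p + 1"]
  by (simp add: gap_bound_def wave_bound_def numeral_2_eq_2)

lemma wave_bound_Suc_Suc:
  "wave_bound (Suc p) m + gap_bound p (Suc m) = wave_bound (Suc p) (Suc m)"
  using binomial_Suc_Suc[of "m + 2*p + 2" "2*p + 2"]
  by (simp add: gap_bound_def wave_bound_def numeral_2_eq_2)

lemma mono_wave_inD:
  assumes "mono_wave_in c A k w"
  shows "ascending_wave w k" "i \<in> {1..k} \<Longrightarrow> w i \<in> A" "i \<in> {1..k} \<Longrightarrow> c (w i) = c (w 1)"
  using assms unfolding mono_wave_in_def by blast+

lemma mono_wave_in_subset: "mono_wave_in c A k w \<Longrightarrow> A \<subseteq> B \<Longrightarrow> mono_wave_in c B k w"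
  unfolding mono_wave_in_def by blast

lemma last_gap_pos: "ascending_wave w m \<Longrightarrow> 1 \<le> last_gap w m"
  unfolding last_gap_def ascending_wave_def
  by (auto dest: spec[of _ "m - 1"])

lemma last_gap_less_length:
  assumes "mono_wave_in c {t..<t + n} k w" "2 \<le> k"
  shows "last_gap w k < n"
proof -
  have "w (k - 1) \<in> {t..<t + n}" "w k \<in> {t..<t + n}"
    using mono_wave_inD(2)[OF assms(1)] \<open>2 \<le> k\<close> by auto
  then show ?thesis using \<open>2 \<le> k\<close> unfolding last_gap_def by auto
qed

lemma ascending_wave_extend:
  assumes w: "ascending_wave w m" and "1 \<le> m" and y: "w m + last_gap w m \<le> y"
  shows "ascending_wave (w(Suc m := y)) (Suc m)"
proof -
  have pos: "\<forall>i\<in>{1..m}. 0 < w i"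
    and inc: "\<forall>i. 1 \<le> i \<and> i < m \<longrightarrow> w i < w (i+1)"
    and convex: "\<forall>i. 2 \<le> i \<and> i \<le> m - 1 \<longrightarrow> int (w (i+1)) - int (w i) \<ge> int (w i) - int (w (i-1))"
    using w unfolding ascending_wave_def by blast+
  have "w m < y" using last_gap_pos[OF w] y by simp
  moreover have "int y - int (w m) \<ge> int (w m) - int (w (m-1))" if "2 \<le> m"
  proof -
    have "w (m-1) < w m" using inc[rule_format, of "m-1"] that by simp
    then show ?thesis using y that unfolding last_gap_def by simp
  qed
  ultimately have
    "\<forall>i\<in>{1..Suc m}. 0 < (w(Suc m := y)) i"
    "\<forall>i. 1 \<le> i \<and> i < Suc m \<longrightarrow> (w(Suc m := y)) i < (w(Suc m := y)) (i+1)"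
    "\<forall>i. 2 \<le> i \<and> i \<le> Suc m - 1 \<longrightarrow>
       int ((w(Suc m := y)) (i+1)) - int ((w(Suc m := y)) i) \<ge>
       int ((w(Suc m := y)) i) - int ((w(Suc m := y)) (i-1))"
    using pos inc convex \<open>1 \<le> m\<close> by (auto simp: le_Suc_eq less_Suc_eq)
  then show ?thesis unfolding ascending_wave_def by blast
qed

lemma mono_wave_in_extend:
  assumes w: "mono_wave_in c A m w" and "1 \<le> m" "w m + last_gap w m \<le> y" "y \<in> A" "c y = c (w 1)"
  shows "mono_wave_in c A (Suc m) (w(Suc m := y))"
proof -
  have "ascending_wave (w(Suc m := y)) (Suc m)"
    using ascending_wave_extend[OF mono_wave_inD(1)[OF w] assms(2,3)] .
  moreover have "\<forall>i\<in>{1..Suc m}. (w(Suc m := y)) i \<in> A"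
    using w \<open>y \<in> A\<close> unfolding mono_wave_in_def by (simp add: atLeastAtMostSuc_conv)
  moreover have "c ((w(Suc m := y)) i) = c (w 1)" if "i \<in> {1..Suc m}" for i
  proof (cases "i = Suc m")
    case True
    with \<open>c y = c (w 1)\<close> show ?thesis by simp
  next
    case False
    with that have "i \<in> {1..m}" by auto
    then have "c (w i) = c (w 1)" by (rule mono_wave_inD(3)[OF w])
    with False show ?thesis by simp
  qed
  moreover have "(w(Suc m := y)) 1 = w 1" using \<open>1 \<le> m\<close> by simp
  ultimately show ?thesis unfolding mono_wave_in_def by simp
qed

lemma mono_wave_in_one_colour:
  assumes "1 \<le> t" "finite C" "card C \<le> 1" "c ` {t..<t+k} \<subseteq> C"
  shows "mono_wave_in c {t..<t+k} k (\<lambda>i. t + i - 1)"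
proof -
  have same_colour: "c x = c t" if "x \<in> {t..<t+k}" "t < t + k" for x
  proof -
    have "c x \<in> C" "c t \<in> C" using that assms(4) by auto
    then show ?thesis using assms(2,3) card_le_Suc0_iff_eq[of C] by auto
  qed
  have colour: "\<forall>i\<in>{1..k}. c (t + i - 1) = c t"
  proof
    fix i assume "i \<in> {1..k}"
    then have "t + i - 1 \<in> {t..<t+k}" "t < t + k" by auto
    then show "c (t + i - 1) = c t" by (rule same_colour)
  qed
  have "ascending_wave (\<lambda>i. t + i - 1) k"
    using \<open>1 \<le> t\<close> unfolding ascending_wave_def by auto
  moreover have "\<forall>i\<in>{1..k}. t + i - 1 \<in> {t..<t+k}" by auto
  ultimately show ?thesis using colour unfolding mono_wave_in_def by simp
qed

lemma greedy_window_subset: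
  assumes "s \<le> x" "x < s + wave_bound (Suc p) m" "g \<le> gap_bound p m"
  shows "{x + g..<x + g + wave_bound p (Suc m)} \<subseteq> {s..<s + wave_bound (Suc p) (Suc m)}"
  using assms gap_bound_Suc[of p m] wave_bound_Suc_Suc[of p m] by auto

lemma greedy_wave_step:
  assumes IH: "\<And>C t c. finite C \<Longrightarrow> card C \<le> Suc p \<Longrightarrow> 1 \<le> t \<Longrightarrow>
      c ` {t..<t + wave_bound p (Suc m)} \<subseteq> C \<Longrightarrow>
      \<exists>v. mono_wave_in c {t..<t + wave_bound p (Suc m)} (Suc m) v"
    and C: "finite C" "card C \<le> Suc (Suc p)"
    and colours: "c ` {s..<s + wave_bound (Suc p) (Suc m)} \<subseteq> C"
    and w: "mono_wave_in c {s..<s + wave_bound (Suc p) m} m w" "last_gap w m \<le> gap_bound p m"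
    and "1 \<le> m" "1 \<le> s"
  shows "\<exists>w'. mono_wave_in c {s..<s + wave_bound (Suc p) (Suc m)} (Suc m) w' \<and>
      last_gap w' (Suc m) \<le> gap_bound p (Suc m)"
proof -
  define t where "t = w m + last_gap w m"
  define window where "window = {t..<t + wave_bound p (Suc m)}"
  have wm: "s \<le> w m" "w m < s + wave_bound (Suc p) m"
    using mono_wave_inD(2)[OF w(1), of m] \<open>1 \<le> m\<close> by auto
  have window_bounds: "w m + last_gap w m \<le> y" "y < w m + gap_bound p (Suc m)"
    if "y \<in> window" for y
    using that w(2) gap_bound_Suc[of p m]
    unfolding window_def t_def atLeastLessThan_iff
    by linarith+
  have window_inside: "window \<subseteq> {s..<s + wave_bound (Suc p) (Suc m)}"
    using greedy_window_subset[OF wm w(2)] unfolding window_def t_def .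
  have "{s..<s + wave_bound (Suc p) m} \<subseteq> {s..<s + wave_bound (Suc p) (Suc m)}"
    using wave_bound_Suc_Suc[of p m] by auto
  with w(1) have w_big: "mono_wave_in c {s..<s + wave_bound (Suc p) (Suc m)} m w"
    by (rule mono_wave_in_subset)
  show ?thesis
  proof (cases "\<exists>y\<in>window. c y = c (w 1)")
    case True
    then obtain y where y: "y \<in> window" "c y = c (w 1)" by blast
    have "mono_wave_in c {s..<s + wave_bound (Suc p) (Suc m)} (Suc m) (w(Suc m := y))"
      by (intro mono_wave_in_extend[OF w_big \<open>1 \<le> m\<close>])
        (use window_bounds(1)[OF y(1)] window_inside y in auto)
    moreover have "last_gap (w(Suc m := y)) (Suc m) = y - w m"
      using \<open>1 \<le> m\<close> by (simp add: last_gap_def)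
    moreover have "y - w m \<le> gap_bound p (Suc m)"
      using window_bounds(2)[OF y(1)] by simp
    ultimately show ?thesis by auto
  next
    case False
    have "w 1 \<in> {s..<s + wave_bound (Suc p) (Suc m)}"
      using mono_wave_inD(2)[OF w_big, of 1] \<open>1 \<le> m\<close> by simp
    then have "c (w 1) \<in> C" using colours by blast
    then have fewer_colours: "card (C - {c (w 1)}) \<le> Suc p"
      using C by (simp add: card_Diff_singleton)
    have window_colours: "c ` window \<subseteq> C - {c (w 1)}"
      using False window_inside colours unfolding image_subset_iff by blast
    have "1 \<le> t" using wm(1) \<open>1 \<le> s\<close> unfolding t_def by simp
    have "finite (C - {c (w 1)})" using C(1) by simp
    from IH[OF this fewer_colours \<open>1 \<le> t\<close> window_colours[unfolded window_def]]
    obtain v where v: "mono_wave_in c window (Suc m) v" unfolding window_def ..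
    have "last_gap v (Suc m) < wave_bound p (Suc m)"
      using last_gap_less_length[OF v[unfolded window_def]] \<open>1 \<le> m\<close> by simp
    then have "last_gap v (Suc m) \<le> gap_bound p (Suc m)"
      using gap_bound_Suc[of p m] by linarith
    with mono_wave_in_subset[OF v window_inside] show ?thesis by blast
  qed
qed

lemma greedy_wave:
  assumes IH: "\<And>C t c k. finite C \<Longrightarrow> card C \<le> Suc p \<Longrightarrow> 1 \<le> t \<Longrightarrow>
      c ` {t..<t + wave_bound p k} \<subseteq> C \<Longrightarrow> \<exists>v. mono_wave_in c {t..<t + wave_bound p k} k v"
    and C: "finite C" "card C \<le> Suc (Suc p)" and "1 \<le> s" "1 \<le> m"
    and colours: "c ` {s..<s + wave_bound (Suc p) m} \<subseteq> C"
  shows "\<exists>w. mono_wave_in c {s..<s + wave_bound (Suc p) m} m w \<and> last_gap w m \<le> gap_bound p m"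
  using \<open>1 \<le> m\<close> colours
proof (induction m rule: nat_induct_at_least)
  case base
  have "wave_bound (Suc p) 1 = 1" "gap_bound p 1 = 1"
    by (simp_all add: wave_bound_def gap_bound_def)
  moreover have "mono_wave_in c {s..<s + 1} 1 (\<lambda>_. s)"
    using \<open>1 \<le> s\<close> unfolding mono_wave_in_def ascending_wave_def by simp
  ultimately show ?case by (auto simp: last_gap_def)
next
  case (Suc m)
  then have "c ` {s..<s + wave_bound (Suc p) m} \<subseteq> C"
    using wave_bound_Suc_Suc[of p m] by fastforce
  with Suc.IH obtain w where
    "mono_wave_in c {s..<s + wave_bound (Suc p) m} m w" "last_gap w m \<le> gap_bound p m"
    by blast
  with IH C Suc.prems Suc.hyps \<open>1 \<le> s\<close> show ?case
    by (intro greedy_wave_step) auto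
qed

lemma mono_wave_in_zero: "mono_wave_in c A 0 w"
  unfolding mono_wave_in_def ascending_wave_def by simp

lemma mono_wave_in_interval:
  "finite C \<Longrightarrow> card C \<le> Suc p \<Longrightarrow> 1 \<le> t \<Longrightarrow> c ` {t..<t + wave_bound p k} \<subseteq> C \<Longrightarrow>
    \<exists>w. mono_wave_in c {t..<t + wave_bound p k} k w"
proof (induction p arbitrary: C t c k)
  case (0 C t c k)
  have "wave_bound 0 k = k" by (simp add: wave_bound_def)
  moreover have "card C \<le> 1" using 0 by simp
  ultimately show ?case
    using mono_wave_in_one_colour[of t C c k] 0 by (intro exI[of _ "\<lambda>i. t + i - 1"]) simp
next
  case (Suc p C t c k)
  show ?case
  proof (cases "k = 0")
    case True
    then show ?thesis using mono_wave_in_zero by blast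
  next
    case False
    then have "1 \<le> k" by simp
    have "\<exists>w. mono_wave_in c {t..<t + wave_bound (Suc p) k} k w \<and> last_gap w k \<le> gap_bound p k"
      by (rule greedy_wave[OF Suc.IH Suc.prems(1-3) \<open>1 \<le> k\<close> Suc.prems(4)])
    then show ?thesis by blast
  qed
qed

lemma has_mono_wave_iff: "has_mono_wave c N k \<longleftrightarrow> (\<exists>w. mono_wave_in c {1..N} k w)"
  unfolding has_mono_wave_def mono_wave_in_def ..

lemma AW_le_wave_bound:
  assumes "1 \<le> k"
  shows "AW k (Suc p) \<le> wave_bound p k"
proof -
  have "{1..<1 + wave_bound p k} = {1..wave_bound p k}" by auto
  then have "has_mono_wave c (wave_bound p k) k" if "\<forall>x\<in>{1..wave_bound p k}. c x < Suc p" for c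
    using mono_wave_in_interval[of "{..<Suc p}" p 1 c k] that
    unfolding has_mono_wave_iff by auto
  moreover have "0 < wave_bound p k"
    using assms by (simp add: wave_bound_def)
  ultimately show ?thesis
    unfolding AW_def by (intro Least_le) blast
qed

lemma wave_bound_le_power:
  "real (wave_bound p k) * fact (2*p + 1) \<le> (real k + 2*p) ^ (2*p + 1)"
proof -
  have "wave_bound p k * fact (2*p + 1) \<le> (k + 2*p) ^ (2*p + 1)"
    unfolding wave_bound_def by (rule binomial_fact_pow)
  then have "real (wave_bound p k * fact (2*p + 1)) \<le> real ((k + 2*p) ^ (2*p + 1))"
    by (rule of_nat_mono)
  then show ?thesis
    by (simp only: of_nat_mult of_nat_fact of_nat_power of_nat_add of_nat_numeral)
qed

lemma wave_bound_asymptotic: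
  assumes "\<epsilon> > 0"
  shows "eventually (\<lambda>k. real (wave_bound p k) \<le> (1 + \<epsilon>) * (real k ^ (2*p + 1) / fact (2*p + 1)))
    sequentially"
proof -
  define q where "q = 2*p + 1"
  have "(\<lambda>k. (1 + 2*p / real k) ^ q) \<longlonglongrightarrow> (1 + 0) ^ q"
    by (intro tendsto_intros)
  moreover have "(1 + 0) ^ q < 1 + \<epsilon>" using \<open>\<epsilon> > 0\<close> by simp
  ultimately have "eventually (\<lambda>k. (1 + 2*p / real k) ^ q < 1 + \<epsilon>) sequentially"
    by (rule order_tendstoD(2))
  with eventually_gt_at_top[of 0] show ?thesis
  proof eventually_elim
    case (elim k)
    then have "(real k + 2*p) ^ q = real k ^ q * (1 + 2*p / real k) ^ q"
      by (simp add: field_simps flip: power_mult_distrib)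
    also have "\<dots> \<le> real k ^ q * (1 + \<epsilon>)"
      using elim by (intro mult_left_mono) auto
    finally have "real (wave_bound p k) * fact q \<le> (1 + \<epsilon>) * real k ^ q"
      using wave_bound_le_power[of p k] unfolding q_def by (simp add: mult.commute)
    then have "real (wave_bound p k) \<le> (1 + \<epsilon>) * real k ^ q / fact q"
      by (simp add: pos_le_divide_eq)
    then show ?case unfolding q_def by (simp only: times_divide_eq_right)
  qed
qed

theorem theorem1:
  fixes r :: nat
  assumes "r \<ge> 1"
  shows "\<forall>\<epsilon>>0. eventually
           (\<lambda>k. real (AW k r) \<le> (1 + \<epsilon>) * (real k ^ (2*r - 1) / fact (2*r - 1)))
           sequentially"
proof (intro allI impI)
  fix \<epsilon> :: real assume "\<epsilon> > 0"
  obtain p where r: "r = Suc p" using assms by (cases r) auto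
  have "eventually (\<lambda>k. real (AW k r) \<le> (1 + \<epsilon>) * (real k ^ (2*p + 1) / fact (2*p + 1)))
      sequentially"
    using wave_bound_asymptotic[OF \<open>\<epsilon> > 0\<close>, of p] eventually_ge_at_top[of 1]
  proof eventually_elim
    case (elim k)
    then have "real (AW k r) \<le> real (wave_bound p k)"
      using AW_le_wave_bound[of k p] unfolding r by simp
    with elim(1) show ?case by linarith
  qed
  moreover have "2*r - 1 = 2*p + 1" using r by simp
  ultimately show "eventually
           (\<lambda>k. real (AW k r) \<le> (1 + \<epsilon>) * (real k ^ (2*r - 1) / fact (2*r - 1)))
           sequentially"
    by simp
qed

end
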